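(* Let $l\in(0,\pi)$, $\alpha>0$, $\delta\ge0$. For $a\in[0,\pi-l]$ let $u_J$ be the solution of the Robin problem with heat source $J=\delta+\chi_{I(a,l)}$. Then $$\max_{a\in[0,\pi-l]}\operatorname{osc}(u_J)=\Theta_\alpha(l,\delta).$$ Moreover, if $\alpha>\alpha_g$, then $\operatorname{osc}(u_J)$, as a function of $a$, increases as $a$ varies from $0$ to $a_0$ and decreases as $a$ varies from $a_0$ to $\pi-l$. If $0<\alpha\le\alpha_g$, then $\operatorname{osc}(u_J)$ increases as $a$ varies from $0$ to $\pi-l$.
   Context: Robin problem: for $\alpha>0$ and $f\in L^1[-\pi,\pi]$, find $u\in C^1[-\pi,\pi]$ with $u'$ absolutely continuous on $[-\pi,\pi]$, $-u''=f$ a.e. on $(-\pi,\pi)$, and $-u'(-\pi)+\alpha u(-\pi)=u'(\pi)+\alpha u(\pi)=0$. It has a unique solution $u_f(x)=\int_{-\pi}^{\pi}G(x,y)f(y)\,dy$, where $G(x,y)=-\tfrac12 c_\alpha xy-\tfrac12|x-y|+\tfrac{1}{2c_\alpha}$ and $c_\alpha=\alpha/(1+\alpha\pi)$. $I(a,l)=[a-l,a+l]$; $\chi_E$ is the characteristic function of $E$; $\operatorname{osc}(u)=\max_{[-\pi,\pi]}u-\min_{[-\pi,\pi]}u$. $a_0=\dfrac{(1+\delta)l}{(1+\alpha\pi)(\delta+2lc_\alpha-l^2c_\alpha^2)}$. If $(1+\delta)l>\delta(\pi-l)$, let $\alpha_0$ be the unique positive root of $$(\pi^2\delta+2\pi l-l^2)\alpha^2+\frac{2(\pi\delta+l)(\pi-l)-\pi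 l(1+\delta)}{\pi-l}\,\alpha+\delta-\frac{(1+\delta)l}{\pi-l}=0,$$ and set $\alpha_g=\alpha_0$. Otherwise set $\alpha_g=0$. $\Theta_\alpha(l,\delta)=\dfrac12\,\dfrac{(1+\delta)l^2}{(\pi^2\delta+2\pi l-l^2)\alpha^2+2(\pi\delta+l)\alpha+\delta}+\pi l+\dfrac{\pi^2\delta}{2}-\dfrac{l^2}{2}$ if $\alpha>\alpha_g$. $\Theta_\alpha(l,\delta)=\dfrac12\,\dfrac{(l^2c_\alpha^2-2lc_\alpha-\delta)(\pi-l)^2}{1+\delta}+\dfrac{l(\pi-l)}{1+\alpha\pi}+\pi l+\dfrac{\pi^2\delta}{2}-\dfrac{l^2}{2}$ if $0<\alpha\le\alpha_g$. *)

theory Defs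
  imports "HOL-Analysis.Analysis"
begin

definition c_alpha :: "real \<Rightarrow> real" where
  "c_alpha \<alpha> = \<alpha> / (1 + \<alpha> * pi)"

definition robin_green :: "real \<Rightarrow> real \<Rightarrow> real \<Rightarrow> real" where
  "robin_green \<alpha> x y = - (1/2) * c_alpha \<alpha> * x * y - (1/2) * \<bar>x - y\<bar> + 1 / (2 * c_alpha \<alpha>)"

definition robin_sol :: "real \<Rightarrow> (real \<Rightarrow> real) \<Rightarrow> real \<Rightarrow> real" where
  "robin_sol \<alpha> f x = integral {-pi..pi} (\<lambda>y. robin_green \<alpha> x y * f y)"

definition osc :: "(real \<Rightarrow> real) \<Rightarrow> real" where
  "osc u = Sup (u ` {-pi..pi}) - Inf (u ` {-pi..pi})"

definition I_int :: "real \<Rightarrow> real \<Rightarrow> real set" where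
  "I_int a l = {a - l .. a + l}"

definition a_zero :: "real \<Rightarrow> real \<Rightarrow> real \<Rightarrow> real" where
  "a_zero \<alpha> l \<delta> = (1 + \<delta>) * l /
     ((1 + \<alpha> * pi) * (\<delta> + 2 * l * c_alpha \<alpha> - l\<^sup>2 * (c_alpha \<alpha>)\<^sup>2))"

definition quad_g :: "real \<Rightarrow> real \<Rightarrow> real \<Rightarrow> real" where
  "quad_g l \<delta> \<alpha> =
     (pi\<^sup>2 * \<delta> + 2 * pi * l - l\<^sup>2) * \<alpha>\<^sup>2
     + (2 * (pi * \<delta> + l) * (pi - l) - pi * l * (1 + \<delta>)) / (pi - l) * \<alpha>
     + \<delta> - (1 + \<delta>) * l / (pi - l)"

definition alpha_g :: "real \<Rightarrow> real \<Rightarrow> real" where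
  "alpha_g l \<delta> = (if (1 + \<delta>) * l > \<delta> * (pi - l)
                    then (THE \<alpha>. \<alpha> > 0 \<and> quad_g l \<delta> \<alpha> = 0) else 0)"

definition Theta :: "real \<Rightarrow> real \<Rightarrow> real \<Rightarrow> real" where
  "Theta \<alpha> l \<delta> =
    (if \<alpha> > alpha_g l \<delta> then
       (1/2) * ((1 + \<delta>) * l\<^sup>2 /
          ((pi\<^sup>2 * \<delta> + 2 * pi * l - l\<^sup>2) * \<alpha>\<^sup>2 + 2 * (pi * \<delta> + l) * \<alpha> + \<delta>))
       + pi * l + pi\<^sup>2 * \<delta> / 2 - l\<^sup>2 / 2
     else
       (1/2) * ((l\<^sup>2 * (c_alpha \<alpha>)\<^sup>2 - 2 * l * c_alpha \<alpha> - \<delta>) * (pi - l)\<^sup>2 / (1 + \<delta>))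
       + l * (pi - l) / (1 + \<alpha> * pi) + pi * l + pi\<^sup>2 * \<delta> / 2 - l\<^sup>2 / 2)"

end

theory Submission
  imports Defs
begin

(*
  Integrating the Green function gives u_J in closed form (uJ). Its derivative
  -delta x - c_alpha a l + (|a + l - x| - |a - l - x|) / 2 is decreasing in x, and
  u_J(pi) - u_J(-pi) = 2 l a (1 - c_alpha pi) >= 0, so osc(u_J) = u_J(xi) - u_J(-pi) for the
  zero xi of the derivative. While a (c_alpha l + delta) <= l (1 + delta) this zero lies in
  I(a, l) and osc(u_J) is a concave quadratic in a with vertex a_0; beyond that threshold
  (which forces delta > 0) it lies left of I(a, l) and
  osc(u_J) = (l (1 - c_alpha a) + delta pi)^2 / (2 delta) decreases in a. As a_0 never exceeds
  the threshold, osc(u_J) increases up to a_0 and decreases after it. Finally the quadratic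
  defining alpha_g has, at alpha, the sign of pi - l - a_0, so alpha > alpha_g exactly when
  the peak a_0 lies in [0, pi - l], and Theta is the value of the quadratic at a_0 or at
  pi - l respectively.
*)

lemma c_alpha_pos: "0 < \<alpha> \<Longrightarrow> 0 < c_alpha \<alpha>"
  by (simp add: c_alpha_def pos_add_strict)

lemma one_minus_c_alpha_pi: "0 < \<alpha> \<Longrightarrow> 1 - c_alpha \<alpha> * pi = 1 / (1 + \<alpha> * pi)"
proof -
  assume "0 < \<alpha>"
  then have "0 < 1 + \<alpha> * pi" by (simp add: add_pos_pos)
  then show ?thesis by (simp add: c_alpha_def field_simps)
qed

lemma c_alpha_mult_less_1:
  assumes "0 < \<alpha>" "x \<le> pi" shows "c_alpha \<alpha> * x < 1"
proof -
  have "c_alpha \<alpha> * x \<le> c_alpha \<alpha> * pi"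
    using assms c_alpha_pos by (simp add: mult_left_mono)
  also have "\<dots> < 1"
  proof -
    have "0 < 1 / (1 + \<alpha> * pi)" using assms(1) by (simp add: add_pos_pos)
    then show ?thesis using one_minus_c_alpha_pi[OF assms(1)] by linarith
  qed
  finally show ?thesis .
qed

lemma monotone_on_transform:
  "monotone_on S r s g \<Longrightarrow> (\<And>x. x \<in> S \<Longrightarrow> f x = g x) \<Longrightarrow> monotone_on S r s f"
  by (simp add: monotone_on_def)

lemma strict_antimono_on_atLeastAtMost_join:
  fixes f :: "'a::linorder \<Rightarrow> 'b::order"
  assumes "strict_antimono_on {a..m} f" "strict_antimono_on {m..b} f"
  shows "strict_antimono_on {a..b} f"
proof (rule monotone_onI)
  fix x y assume xy: "x \<in> {a..b}" "y \<in> {a..b}" "x < y"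
  consider "y \<le> m" | "m \<le> x" | "x < m" "m < y"
    by (meson linorder_not_le)
  then show "f y < f x"
  proof cases
    case 1
    then show ?thesis using monotone_onD[OF assms(1), of x y] xy by auto
  next
    case 2
    then show ?thesis using monotone_onD[OF assms(2), of x y] xy by auto
  next
    case 3
    then have "f y < f m" "f m < f x"
      using monotone_onD[OF assms(2), of m y] monotone_onD[OF assms(1), of x m] xy by auto
    then show ?thesis by order
  qed
qed

lemma osc_eq_at_sign_change:
  fixes u u' :: "real \<Rightarrow> real"
  assumes deriv: "\<And>x. x \<in> {-pi..pi} \<Longrightarrow> (u has_real_derivative u' x) (at x)"
    and xs: "xs \<in> {-pi..pi}"
    and up: "\<And>x. x \<in> {-pi..xs} \<Longrightarrow> 0 \<le> u' x"
    and down: "\<And>x. x \<in> {xs..pi} \<Longrightarrow> u' x \<le> 0"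
    and ends: "u (-pi) \<le> u pi"
  shows "osc u = u xs - u (-pi)"
proof -
  have inc: "u x \<le> u y" if "-pi \<le> x" "x \<le> y" "y \<le> xs" for x y
  proof (rule DERIV_nonneg_imp_nondecreasing[OF \<open>x \<le> y\<close>])
    fix t assume "x \<le> t" "t \<le> y"
    with that xs show "\<exists>d. (u has_real_derivative d) (at t) \<and> 0 \<le> d"
      by (intro exI[of _ "u' t"] conjI deriv up) auto
  qed
  have dec: "u y \<le> u x" if "xs \<le> x" "x \<le> y" "y \<le> pi" for x y
  proof (rule DERIV_nonpos_imp_nonincreasing[OF \<open>x \<le> y\<close>])
    fix t assume "x \<le> t" "t \<le> y"
    with that xs show "\<exists>d. (u has_real_derivative d) (at t) \<and> d \<le> 0"
      by (intro exI[of _ "u' t"] conjI deriv down) auto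
  qed
  have bounds: "u (-pi) \<le> u x \<and> u x \<le> u xs" if "x \<in> {-pi..pi}" for x
  proof (cases "x \<le> xs")
    case True
    then show ?thesis using inc[of "-pi" x] inc[of x xs] that by auto
  next
    case False
    then show ?thesis using dec[of xs x] dec[of x pi] ends that by auto
  qed
  have "Sup (u ` {-pi..pi}) = u xs"
    by (rule cSup_eq_maximum) (use xs bounds in auto)
  moreover have "Inf (u ` {-pi..pi}) = u (-pi)"
    by (rule cInf_eq_minimum) (use bounds in auto)
  ultimately show ?thesis by (simp add: osc_def)
qed

lemma quadratic_positive_root:
  fixes p q s :: real
  assumes "0 < p" "s < 0"
  obtains r where "0 < r" "\<And>x. 0 < x \<Longrightarrow> sgn (p * x\<^sup>2 + q * x + s) = sgn (x - r)"
proof -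
  define D where "D = q\<^sup>2 - 4 * p * s"
  have "q\<^sup>2 < D"
    using mult_pos_neg[OF assms] by (simp add: D_def)
  have sqrt_D: "\<bar>q\<bar> < sqrt D" "(sqrt D)\<^sup>2 = D"
    using real_less_rsqrt[of "\<bar>q\<bar>"] \<open>q\<^sup>2 < D\<close> le_less_trans[OF zero_le_power2 \<open>q\<^sup>2 < D\<close>]
    by simp_all
  define r where "r = (- q + sqrt D) / (2 * p)"
  define r' where "r' = (- q - sqrt D) / (2 * p)"
  have "0 < r" "r' < 0"
    using sqrt_D(1) assms(1) unfolding r_def r'_def by (auto intro: divide_pos_pos divide_neg_pos)
  have factor: "p * x\<^sup>2 + q * x + s = p * (x - r) * (x - r')" for x
    using assms(1) sqrt_D(2)
    by (simp add: r_def r'_def D_def field_simps power2_eq_square)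
  show ?thesis
  proof (rule that[OF \<open>0 < r\<close>])
    fix x :: real assume "0 < x"
    then have "sgn (x - r') = 1"
      using \<open>r' < 0\<close> by simp
    then show "sgn (p * x\<^sup>2 + q * x + s) = sgn (x - r)"
      using assms(1) by (simp add: factor sgn_mult)
  qed
qed

definition abs_antideriv :: "real \<Rightarrow> real" where
  "abs_antideriv t = t * \<bar>t\<bar> / 2"

lemma abs_antideriv_nonneg: "0 \<le> t \<Longrightarrow> abs_antideriv t = t\<^sup>2 / 2"
  and abs_antideriv_nonpos: "t \<le> 0 \<Longrightarrow> abs_antideriv t = - t\<^sup>2 / 2"
  by (simp_all add: abs_antideriv_def power2_eq_square)

lemma has_real_derivative_abs_antideriv: "(abs_antideriv has_real_derivative \<bar>t\<bar>) (at t)"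
proof -
  consider "t < 0" | "t = 0" | "t > 0" by linarith
  then show ?thesis
  proof cases
    case 1
    have "((\<lambda>t. - t * t / 2) has_real_derivative \<bar>t\<bar>) (at t)"
      using 1 by (auto intro!: derivative_eq_intros)
    then show ?thesis
      by (rule has_field_derivative_transform_within_open[of _ _ _ "{..<0}"])
         (use 1 in \<open>auto simp: abs_antideriv_def\<close>)
  next
    case 2
    have "((\<lambda>y. \<bar>y\<bar> / 2) \<longlongrightarrow> \<bar>0\<bar> / 2) (at (0::real))"
      by (intro tendsto_intros) simp
    then have "((\<lambda>y. (abs_antideriv y - abs_antideriv 0) / (y - 0)) \<longlongrightarrow> 0) (at 0)"
      by (auto intro: Lim_transform_eventually simp: eventually_at_filter abs_antideriv_def)
    then show ?thesis using 2 by (simp add: has_field_derivative_iff)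
  next
    case 3
    have "((\<lambda>t. t * t / 2) has_real_derivative \<bar>t\<bar>) (at t)"
      using 3 by (auto intro!: derivative_eq_intros)
    then show ?thesis
      by (rule has_field_derivative_transform_within_open[of _ _ _ "{0<..}"])
         (use 3 in \<open>auto simp: abs_antideriv_def\<close>)
  qed
qed

lemma has_real_derivative_abs_antideriv_comp[derivative_intros]:
  "(g has_real_derivative g') (at x within S) \<Longrightarrow>
   ((\<lambda>x. abs_antideriv (g x)) has_real_derivative \<bar>g x\<bar> * g') (at x within S)"
  by (rule DERIV_chain2[OF has_real_derivative_abs_antideriv])

definition robin_green_primitive :: "real \<Rightarrow> real \<Rightarrow> real \<Rightarrow> real" where
  "robin_green_primitive \<alpha> x y =
     - c_alpha \<alpha> * x * y\<^sup>2 / 4 - abs_antideriv (y - x) / 2 + y / (2 * c_alpha \<alpha>)"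

lemma has_integral_robin_green:
  assumes "0 < \<alpha>" "p \<le> q"
  shows "(robin_green \<alpha> x has_integral
           robin_green_primitive \<alpha> x q - robin_green_primitive \<alpha> x p) {p..q}"
proof -
  have "(robin_green_primitive \<alpha> x has_real_derivative robin_green \<alpha> x y) (at y within {p..q})" for y
    using c_alpha_pos[OF assms(1)] unfolding robin_green_primitive_def
    by (auto intro!: derivative_eq_intros
        simp: robin_green_def abs_minus_commute power2_eq_square field_simps)
  then show ?thesis
    by (intro fundamental_theorem_of_calculus[OF assms(2)])
       (simp add: has_real_derivative_iff_has_vector_derivative)
qed

definition uJ :: "real \<Rightarrow> real \<Rightarrow> real \<Rightarrow> real \<Rightarrow> real \<Rightarrow> real" where
  "uJ \<alpha> l \<delta> a x =
     \<delta> * (robin_green_primitive \<alpha> x pi - robin_green_primitive \<alpha> x (-pi))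
     + (robin_green_primitive \<alpha> x (a + l) - robin_green_primitive \<alpha> x (a - l))"

lemma robin_sol_eq_uJ:
  assumes "0 < \<alpha>" "0 \<le> l" "-pi \<le> a - l" "a + l \<le> pi"
  shows "robin_sol \<alpha> (\<lambda>y. \<delta> + indicator (I_int a l) y) = uJ \<alpha> l \<delta> a"
proof
  fix x
  let ?G = "robin_green_primitive \<alpha> x"
  have const: "((\<lambda>y. robin_green \<alpha> x y * \<delta>) has_integral (?G pi - ?G (-pi)) * \<delta>) {-pi..pi}"
    using assms by (intro has_integral_mult_left has_integral_robin_green) auto
  have heated: "((\<lambda>y. robin_green \<alpha> x y * indicator (I_int a l) y) has_integral
                   ?G (a + l) - ?G (a - l)) {-pi..pi}"
  proof -
    have "(robin_green \<alpha> x has_integral ?G (a + l) - ?G (a - l)) (I_int a l \<inter> {-pi..pi})"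
      using assms by (simp add: I_int_def Int_absorb2 has_integral_robin_green)
    then have "((\<lambda>y. if y \<in> I_int a l then robin_green \<alpha> x y else 0) has_integral
                 ?G (a + l) - ?G (a - l)) {-pi..pi}"
      by (simp add: has_integral_restrict_Int)
    then show ?thesis
      by (rule has_integral_eq[rotated]) (simp add: indicator_def)
  qed
  have "((\<lambda>y. robin_green \<alpha> x y * (\<delta> + indicator (I_int a l) y)) has_integral
          uJ \<alpha> l \<delta> a x) {-pi..pi}"
    using has_integral_add[OF const heated] by (simp add: uJ_def distrib_left mult.commute)
  then show "robin_sol \<alpha> (\<lambda>y. \<delta> + indicator (I_int a l) y) x = uJ \<alpha> l \<delta> a x"
    unfolding robin_sol_def by (rule integral_unique)
qed

lemma uJ_eq:
  assumes "0 < \<alpha>" "-pi \<le> x" "x \<le> pi"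
  shows "uJ \<alpha> l \<delta> a x =
           \<delta> * (pi / c_alpha \<alpha> - (pi\<^sup>2 + x\<^sup>2) / 2) - c_alpha \<alpha> * a * l * x
           - (abs_antideriv (a + l - x) - abs_antideriv (a - l - x)) / 2 + l / c_alpha \<alpha>"
proof -
  have abs_antideriv_values:
    "abs_antideriv (pi - x) = (pi - x)\<^sup>2 / 2" "abs_antideriv (- pi - x) = - (pi + x)\<^sup>2 / 2"
    using assms by (auto simp: abs_antideriv_def power2_eq_square algebra_simps)
  show ?thesis
    using c_alpha_pos[OF assms(1)]
    unfolding uJ_def robin_green_primitive_def abs_antideriv_values
    by (simp add: field_simps power2_eq_square)
qed

lemma uJ_minus_uJ_left_end:
  assumes "0 < \<alpha>" "0 \<le> l" "-pi \<le> a - l" "-pi \<le> x" "x \<le> pi"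
  shows "uJ \<alpha> l \<delta> a x - uJ \<alpha> l \<delta> a (-pi) =
           \<delta> * (pi\<^sup>2 - x\<^sup>2) / 2 - c_alpha \<alpha> * a * l * (x + pi) + l * (a + pi)
           - (abs_antideriv (a + l - x) - abs_antideriv (a - l - x)) / 2"
proof -
  have "abs_antideriv (a + l - - pi) - abs_antideriv (a - l - - pi) = 2 * l * (a + pi)"
    using assms by (auto simp: abs_antideriv_def power2_eq_square field_simps)
  with assms show ?thesis
    by (simp add: uJ_eq field_simps power2_eq_square)
qed

definition uJ_deriv :: "real \<Rightarrow> real \<Rightarrow> real \<Rightarrow> real \<Rightarrow> real \<Rightarrow> real" where
  "uJ_deriv \<alpha> l \<delta> a x = - \<delta> * x - c_alpha \<alpha> * a * l + (\<bar>a + l - x\<bar> - \<bar>a - l - x\<bar>) / 2"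

lemma has_real_derivative_uJ:
  assumes "0 < \<alpha>" "-pi \<le> x" "x \<le> pi"
  shows "(uJ \<alpha> l \<delta> a has_real_derivative uJ_deriv \<alpha> l \<delta> a x) (at x)"
proof -
  have "\<bar>pi - x\<bar> = pi - x" "\<bar>- pi - x\<bar> = pi + x" using assms by auto
  with c_alpha_pos[OF assms(1)] show ?thesis
    unfolding uJ_def robin_green_primitive_def
    by (auto intro!: derivative_eq_intros simp: uJ_deriv_def power2_eq_square field_simps)
qed

lemma uJ_deriv_antimono:
  assumes "0 \<le> \<delta>" "0 \<le> l" "x \<le> y"
  shows "uJ_deriv \<alpha> l \<delta> a y \<le> uJ_deriv \<alpha> l \<delta> a x"
proof -
  define g where "g t = \<bar>a + l - t\<bar> - \<bar>a - l - t\<bar>" for t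
  have "g y \<le> g x"
    using assms(2,3) unfolding g_def by arith
  moreover have "\<delta> * x \<le> \<delta> * y"
    using mult_left_mono[OF assms(3,1)] .
  moreover have "uJ_deriv \<alpha> l \<delta> a t = g t / 2 - \<delta> * t - c_alpha \<alpha> * a * l" for t
    unfolding uJ_deriv_def g_def by simp
  ultimately show ?thesis by simp
qed

definition osc_uJ :: "real \<Rightarrow> real \<Rightarrow> real \<Rightarrow> real \<Rightarrow> real" where
  "osc_uJ \<alpha> l \<delta> a = osc (robin_sol \<alpha> (\<lambda>y. \<delta> + indicator (I_int a l) y))"

lemma osc_uJ_eq_at_critical_point:
  assumes "0 < \<alpha>" "0 \<le> \<delta>" "0 \<le> l" "0 \<le> a" "a + l \<le> pi"
    and xs: "xs \<in> {-pi..pi}" "uJ_deriv \<alpha> l \<delta> a xs = 0"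
  shows "osc_uJ \<alpha> l \<delta> a = uJ \<alpha> l \<delta> a xs - uJ \<alpha> l \<delta> a (-pi)"
proof -
  have "abs_antideriv (a + l - pi) - abs_antideriv (a - l - pi) = 2 * l * (pi - a)"
    using assms by (simp add: abs_antideriv_nonpos power2_eq_square field_simps)
  note right_end = uJ_minus_uJ_left_end[of \<alpha> l a pi \<delta>, unfolded this]
  have "uJ \<alpha> l \<delta> a pi - uJ \<alpha> l \<delta> a (-pi) = 2 * l * a * (1 - c_alpha \<alpha> * pi)"
    using right_end assms by (simp add: field_simps)
  moreover have "0 \<le> 2 * l * a * (1 - c_alpha \<alpha> * pi)"
    using c_alpha_mult_less_1[of \<alpha> pi] assms by simp
  ultimately have ends: "uJ \<alpha> l \<delta> a (-pi) \<le> uJ \<alpha> l \<delta> a pi" by linarith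
  have deriv: "(uJ \<alpha> l \<delta> a has_real_derivative uJ_deriv \<alpha> l \<delta> a x) (at x)"
    if "x \<in> {-pi..pi}" for x
    using has_real_derivative_uJ assms(1) that by auto
  have up: "0 \<le> uJ_deriv \<alpha> l \<delta> a x" if "x \<in> {-pi..xs}" for x
    using uJ_deriv_antimono[of \<delta> l x xs \<alpha> a] xs(2) assms that by auto
  have down: "uJ_deriv \<alpha> l \<delta> a x \<le> 0" if "x \<in> {xs..pi}" for x
    using uJ_deriv_antimono[of \<delta> l xs x \<alpha> a] xs(2) assms that by auto
  have "osc (uJ \<alpha> l \<delta> a) = uJ \<alpha> l \<delta> a xs - uJ \<alpha> l \<delta> a (-pi)"
    by (rule osc_eq_at_sign_change[OF deriv xs(1) up down ends])
  then show ?thesis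
    unfolding osc_uJ_def using assms by (simp add: robin_sol_eq_uJ)
qed

(* For a <= a_switch the zero of uJ_deriv lies in I(a, l), for larger a to the left of it;
   the oscillation is then osc_inside, resp. osc_left. *)
definition a_switch :: "real \<Rightarrow> real \<Rightarrow> real \<Rightarrow> real" where
  "a_switch \<alpha> l \<delta> = l * (1 + \<delta>) / (c_alpha \<alpha> * l + \<delta>)"

definition osc_inside_curv :: "real \<Rightarrow> real \<Rightarrow> real \<Rightarrow> real" where
  "osc_inside_curv \<alpha> l \<delta> = \<delta> + 2 * l * c_alpha \<alpha> - l\<^sup>2 * (c_alpha \<alpha>)\<^sup>2"

definition osc_inside :: "real \<Rightarrow> real \<Rightarrow> real \<Rightarrow> real \<Rightarrow> real" where
  "osc_inside \<alpha> l \<delta> a = \<delta> * pi\<^sup>2 / 2 + pi * l - l\<^sup>2 / 2 + l * (1 - c_alpha \<alpha> * pi) * a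
     - osc_inside_curv \<alpha> l \<delta> / (1 + \<delta>) * a\<^sup>2 / 2"

definition osc_left :: "real \<Rightarrow> real \<Rightarrow> real \<Rightarrow> real \<Rightarrow> real" where
  "osc_left \<alpha> l \<delta> a = (l * (1 - c_alpha \<alpha> * a) + \<delta> * pi)\<^sup>2 / (2 * \<delta>)"

lemma osc_uJ_inside:
  assumes "0 < \<alpha>" "0 \<le> \<delta>" "0 < l" "0 \<le> a" "a + l \<le> pi" "a \<le> a_switch \<alpha> l \<delta>"
  shows "osc_uJ \<alpha> l \<delta> a = osc_inside \<alpha> l \<delta> a"
proof -
  define c where "c = c_alpha \<alpha>"
  define xs where "xs = a * (1 - c * l) / (1 + \<delta>)"
  have c: "0 < c" "c * l < 1"
    using c_alpha_pos c_alpha_mult_less_1[of \<alpha> l] assms unfolding c_def by auto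
  then have "0 < c * l + \<delta>"
    using assms by (simp add: add_pos_nonneg)
  then have "a * (c * l + \<delta>) \<le> l * (1 + \<delta>)"
    using assms(6) by (simp add: a_switch_def c_def pos_le_divide_eq)
  moreover have xs: "(1 + \<delta>) * xs = a * (1 - c * l)"
    using assms(2) unfolding xs_def by simp
  moreover have "(1 + \<delta>) * (xs - (a - l)) = l * (1 + \<delta>) - a * (c * l + \<delta>)"
    "(1 + \<delta>) * (a - xs) = a * (c * l + \<delta>)"
    using xs by (simp_all add: algebra_simps)
  ultimately have "0 \<le> (1 + \<delta>) * (xs - (a - l))" "0 \<le> (1 + \<delta>) * (a - xs)"
    using assms \<open>0 < c * l + \<delta>\<close> by simp_all
  then have "a - l \<le> xs" "xs \<le> a"
    using assms(2) by (simp_all add: zero_le_mult_iff)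
  moreover have "0 \<le> xs"
    using assms c unfolding xs_def by simp
  ultimately have critical:
    "abs_antideriv (a + l - xs) - abs_antideriv (a - l - xs) = (a - xs)\<^sup>2 + l\<^sup>2"
    "uJ_deriv \<alpha> l \<delta> a xs = 0" "xs \<in> {-pi..pi}"
    using assms xs
    by (simp_all add: abs_antideriv_nonneg abs_antideriv_nonpos uJ_deriv_def c_def[symmetric]
        field_simps power2_eq_square)
  have "osc_uJ \<alpha> l \<delta> a = uJ \<alpha> l \<delta> a xs - uJ \<alpha> l \<delta> a (-pi)"
    using assms critical by (intro osc_uJ_eq_at_critical_point) auto
  also have "\<dots> = \<delta> * pi\<^sup>2 / 2 + pi * l - l\<^sup>2 / 2 + l * (1 - c * pi) * a
      + ((1 + \<delta>) * xs\<^sup>2 - a\<^sup>2) / 2 + xs * (a * (1 - c * l) - (1 + \<delta>) * xs)"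
    using assms critical
    by (simp add: uJ_minus_uJ_left_end c_def[symmetric] field_simps power2_eq_square)
  also have "\<dots> = \<delta> * pi\<^sup>2 / 2 + pi * l - l\<^sup>2 / 2 + l * (1 - c * pi) * a
      + ((a * (1 - c * l))\<^sup>2 / (1 + \<delta>) - a\<^sup>2) / 2"
  proof -
    have "(1 + \<delta>) * xs\<^sup>2 = (a * (1 - c * l))\<^sup>2 / (1 + \<delta>)"
      using assms(2) by (simp add: xs[symmetric] power2_eq_square)
    then show ?thesis unfolding xs by simp
  qed
  also have "\<dots> = osc_inside \<alpha> l \<delta> a"
    using assms(2)
    by (simp add: osc_inside_def osc_inside_curv_def c_def[symmetric] field_simps power2_eq_square)
  finally show ?thesis .
qed

lemma osc_uJ_left:
  assumes "0 < \<alpha>" "0 < \<delta>" "0 < l" "0 \<le> a" "a + l \<le> pi" "a_switch \<alpha> l \<delta> \<le> a"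
  shows "osc_uJ \<alpha> l \<delta> a = osc_left \<alpha> l \<delta> a"
proof -
  define c where "c = c_alpha \<alpha>"
  define xs where "xs = l * (1 - c * a) / \<delta>"
  have c: "0 < c" "c * a < 1"
    using c_alpha_pos c_alpha_mult_less_1[of \<alpha> a] assms unfolding c_def by auto
  have "l * (1 + \<delta>) \<le> a * (c * l + \<delta>)"
    using assms c by (simp add: a_switch_def c_def pos_divide_le_eq add_pos_pos)
  moreover have xs: "\<delta> * xs = l * (1 - c * a)"
    using assms(2) unfolding xs_def by simp
  moreover have "\<delta> * (a - l - xs) = a * (c * l + \<delta>) - l * (1 + \<delta>)"
    using xs by (simp add: algebra_simps)
  ultimately have "0 \<le> \<delta> * (a - l - xs)"
    by simp
  then have "xs \<le> a - l"
    using assms(2) by (simp add: zero_le_mult_iff)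
  moreover have "0 \<le> xs"
    using assms c unfolding xs_def by simp
  ultimately have critical:
    "abs_antideriv (a + l - xs) - abs_antideriv (a - l - xs) = 2 * l * (a - xs)"
    "uJ_deriv \<alpha> l \<delta> a xs = 0" "xs \<in> {-pi..pi}"
    using assms xs
    by (simp_all add: abs_antideriv_nonneg uJ_deriv_def c_def[symmetric] field_simps power2_eq_square)
  have "osc_uJ \<alpha> l \<delta> a = uJ \<alpha> l \<delta> a xs - uJ \<alpha> l \<delta> a (-pi)"
    using assms critical by (intro osc_uJ_eq_at_critical_point) auto
  also have "\<dots> = \<delta> * pi\<^sup>2 / 2 - \<delta> * xs\<^sup>2 / 2 + (pi + xs) * (l * (1 - c * a))"
    using assms critical
    by (simp add: uJ_minus_uJ_left_end c_def[symmetric] field_simps power2_eq_square)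
  also have "\<dots> = (\<delta> * xs + \<delta> * pi)\<^sup>2 / (2 * \<delta>)"
    unfolding xs[symmetric] using assms(2) by (simp add: field_simps power2_eq_square)
  also have "\<dots> = osc_left \<alpha> l \<delta> a"
    unfolding osc_left_def xs c_def ..
  finally show ?thesis .
qed

lemma osc_inside_curv_pos:
  assumes "0 < \<alpha>" "0 < l" "l \<le> pi" "0 \<le> \<delta>"
  shows "0 < osc_inside_curv \<alpha> l \<delta>"
proof -
  have "0 < c_alpha \<alpha> * l" "c_alpha \<alpha> * l < 1"
    using c_alpha_pos c_alpha_mult_less_1 assms by auto
  then have "0 < (c_alpha \<alpha> * l) * (2 - c_alpha \<alpha> * l)"
    by simp
  with assms(4) show ?thesis
    by (simp add: osc_inside_curv_def power2_eq_square algebra_simps)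
qed

lemma a_zero_eq:
  assumes "0 < \<alpha>"
  shows "a_zero \<alpha> l \<delta> = l * (1 - c_alpha \<alpha> * pi) * (1 + \<delta>) / osc_inside_curv \<alpha> l \<delta>"
  by (simp add: a_zero_def one_minus_c_alpha_pi[OF assms] osc_inside_curv_def)

lemma a_zero_pos:
  assumes "0 < \<alpha>" "0 < l" "l \<le> pi" "0 \<le> \<delta>"
  shows "0 < a_zero \<alpha> l \<delta>"
  using osc_inside_curv_pos[OF assms] c_alpha_mult_less_1[of \<alpha> pi] assms
  by (simp add: a_zero_eq)

lemma osc_inside_curv_mult_a_zero:
  assumes "0 < \<alpha>" "0 < l" "l \<le> pi" "0 \<le> \<delta>"
  shows "osc_inside_curv \<alpha> l \<delta> / (1 + \<delta>) * a_zero \<alpha> l \<delta> = l * (1 - c_alpha \<alpha> * pi)"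
  using osc_inside_curv_pos[OF assms] assms(4) by (simp add: a_zero_eq[OF assms(1)])

lemma osc_inside_diff:
  assumes "0 < \<alpha>" "0 < l" "l \<le> pi" "0 \<le> \<delta>"
  shows "osc_inside \<alpha> l \<delta> b - osc_inside \<alpha> l \<delta> a =
           (b - a) * (osc_inside_curv \<alpha> l \<delta> / (1 + \<delta>)) * (a_zero \<alpha> l \<delta> - (a + b) / 2)"
proof -
  define g where "g = osc_inside_curv \<alpha> l \<delta> / (1 + \<delta>)"
  have vertex: "g * a_zero \<alpha> l \<delta> = l * (1 - c_alpha \<alpha> * pi)"
    unfolding g_def by (rule osc_inside_curv_mult_a_zero[OF assms])
  have "(b - a) * g * (a_zero \<alpha> l \<delta> - (a + b) / 2) = (b - a) * (g * a_zero \<alpha> l \<delta>) - g * (b\<^sup>2 - a\<^sup>2) / 2"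
    by (simp add: power2_eq_square algebra_simps)
  also have "\<dots> = osc_inside \<alpha> l \<delta> b - osc_inside \<alpha> l \<delta> a"
    unfolding vertex by (simp add: osc_inside_def g_def[symmetric] field_simps power2_eq_square)
  finally show ?thesis
    by (simp add: g_def)
qed

lemma osc_inside_strict_mono:
  assumes "0 < \<alpha>" "0 < l" "l \<le> pi" "0 \<le> \<delta>"
  shows "strict_mono_on {..a_zero \<alpha> l \<delta>} (osc_inside \<alpha> l \<delta>)"
proof (rule strict_mono_onI)
  fix a b assume "a \<in> {..a_zero \<alpha> l \<delta>}" "b \<in> {..a_zero \<alpha> l \<delta>}" "a < b"
  then have "0 < (b - a) * (osc_inside_curv \<alpha> l \<delta> / (1 + \<delta>)) * (a_zero \<alpha> l \<delta> - (a + b) / 2)"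
    using osc_inside_curv_pos[OF assms] assms(4) by (intro mult_pos_pos) auto
  then show "osc_inside \<alpha> l \<delta> a < osc_inside \<alpha> l \<delta> b"
    using osc_inside_diff[OF assms, of b a] by simp
qed

lemma osc_inside_strict_antimono:
  assumes "0 < \<alpha>" "0 < l" "l \<le> pi" "0 \<le> \<delta>"
  shows "strict_antimono_on {a_zero \<alpha> l \<delta>..} (osc_inside \<alpha> l \<delta>)"
proof (rule monotone_onI)
  fix a b assume "a \<in> {a_zero \<alpha> l \<delta>..}" "b \<in> {a_zero \<alpha> l \<delta>..}" "a < b"
  then have "(b - a) * (osc_inside_curv \<alpha> l \<delta> / (1 + \<delta>)) * (a_zero \<alpha> l \<delta> - (a + b) / 2) < 0"
    using osc_inside_curv_pos[OF assms] assms(4) by (intro mult_pos_neg) auto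
  then show "osc_inside \<alpha> l \<delta> b < osc_inside \<alpha> l \<delta> a"
    using osc_inside_diff[OF assms, of b a] by simp
qed

lemma osc_left_strict_antimono:
  assumes "0 < \<alpha>" "0 < \<delta>" "0 < l"
  shows "strict_antimono_on {..pi} (osc_left \<alpha> l \<delta>)"
proof (rule monotone_onI)
  fix a b assume "a \<in> {..pi}" "b \<in> {..pi}" "a < b"
  then have "0 < 1 - c_alpha \<alpha> * b" "c_alpha \<alpha> * a < c_alpha \<alpha> * b"
    using c_alpha_mult_less_1[of \<alpha> b] c_alpha_pos[of \<alpha>] assms by simp_all
  then have "0 < l * (1 - c_alpha \<alpha> * b)" "l * (1 - c_alpha \<alpha> * b) < l * (1 - c_alpha \<alpha> * a)"
    using assms(3) by simp_all
  moreover have "0 \<le> \<delta> * pi"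
    using assms(2) by simp
  ultimately show "osc_left \<alpha> l \<delta> b < osc_left \<alpha> l \<delta> a"
    unfolding osc_left_def using assms(2)
    by (intro divide_strict_right_mono power_strict_mono) auto
qed

lemma a_zero_le_a_switch:
  assumes "0 < \<alpha>" "0 < l" "l \<le> pi" "0 \<le> \<delta>"
  shows "a_zero \<alpha> l \<delta> \<le> a_switch \<alpha> l \<delta>"
proof -
  define A where "A = 1 + \<alpha> * pi"
  define c where "c = c_alpha \<alpha>"
  have A: "1 \<le> A"
    using assms unfolding A_def by simp
  then have cA: "c * A = \<alpha>"
    unfolding c_def c_alpha_def A_def by simp
  have c: "0 < c" "c * l < 1"
    using c_alpha_pos c_alpha_mult_less_1 assms unfolding c_def by auto
  have "A * osc_inside_curv \<alpha> l \<delta> = A * \<delta> + (c * A) * l * (2 - c * l)"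
    by (simp add: osc_inside_curv_def c_def[symmetric] power2_eq_square algebra_simps)
  also have "\<dots> = A * \<delta> + \<alpha> * l * (2 - c * l)"
    unfolding cA ..
  finally have "A * osc_inside_curv \<alpha> l \<delta> = A * \<delta> + \<alpha> * l * (2 - c * l)" .
  moreover have "c * l \<le> \<alpha> * l * (2 - c * l)"
  proof -
    have "c * 1 \<le> c * A"
      using A c by (intro mult_left_mono) auto
    then have "c * l \<le> \<alpha> * l"
      using assms(2) cA by (intro mult_right_mono) auto
    also have "\<dots> \<le> \<alpha> * l * (2 - c * l)"
      using assms c mult_left_mono[of 1 "2 - c * l" "\<alpha> * l"] by simp
    finally show ?thesis .
  qed
  moreover have "\<delta> \<le> A * \<delta>"
    using A assms by (simp add: mult_le_cancel_right1)
  ultimately have "c * l + \<delta> \<le> A * osc_inside_curv \<alpha> l \<delta>"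
    by linarith
  moreover have "0 < c * l + \<delta>"
    using c assms by (simp add: add_pos_nonneg)
  ultimately have "l * (1 + \<delta>) / (A * osc_inside_curv \<alpha> l \<delta>) \<le> l * (1 + \<delta>) / (c * l + \<delta>)"
    using assms by (intro divide_left_mono) auto
  then show ?thesis
    by (simp add: a_zero_def a_switch_def A_def c_def osc_inside_curv_def mult.commute)
qed

lemma pi_less_a_switch_zero:
  assumes "0 < \<alpha>" "0 < l"
  shows "pi < a_switch \<alpha> l 0"
  using c_alpha_mult_less_1[of \<alpha> pi] c_alpha_pos[of \<alpha>] assms
  by (simp add: a_switch_def pos_less_divide_eq mult.commute)

lemma osc_uJ_strict_mono_on:
  assumes "0 < \<alpha>" "0 \<le> \<delta>" "0 < l" "l < pi"
  shows "strict_mono_on ({0..a_zero \<alpha> l \<delta>} \<inter> {0..pi - l}) (osc_uJ \<alpha> l \<delta>)"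
proof (rule monotone_on_transform)
  show "strict_mono_on ({0..a_zero \<alpha> l \<delta>} \<inter> {0..pi - l}) (osc_inside \<alpha> l \<delta>)"
    using assms by (intro monotone_on_subset[OF osc_inside_strict_mono]) auto
  show "osc_uJ \<alpha> l \<delta> a = osc_inside \<alpha> l \<delta> a" if "a \<in> {0..a_zero \<alpha> l \<delta>} \<inter> {0..pi - l}" for a
    using that assms a_zero_le_a_switch[of \<alpha> l \<delta>] by (intro osc_uJ_inside) auto
qed

lemma osc_uJ_strict_antimono_on:
  assumes "0 < \<alpha>" "0 \<le> \<delta>" "0 < l" "l < pi"
  shows "strict_antimono_on {a_zero \<alpha> l \<delta>..pi - l} (osc_uJ \<alpha> l \<delta>)"
proof -
  let ?a0 = "a_zero \<alpha> l \<delta>" and ?m = "a_switch \<alpha> l \<delta>"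
  have a0: "0 < ?a0" "?a0 \<le> ?m"
    using a_zero_pos[OF assms(1,3) _ assms(2)] a_zero_le_a_switch[OF assms(1,3) _ assms(2)] assms(4)
    by simp_all
  have inside: "strict_antimono_on {?a0..min ?m (pi - l)} (osc_uJ \<alpha> l \<delta>)"
  proof (rule monotone_on_transform)
    show "strict_antimono_on {?a0..min ?m (pi - l)} (osc_inside \<alpha> l \<delta>)"
      using osc_inside_strict_antimono[OF assms(1,3) less_imp_le[OF assms(4)] assms(2)]
      by (rule monotone_on_subset) auto
    show "osc_uJ \<alpha> l \<delta> a = osc_inside \<alpha> l \<delta> a" if "a \<in> {?a0..min ?m (pi - l)}" for a
      using that assms a0 by (intro osc_uJ_inside) auto
  qed
  show ?thesis
  proof (cases "pi - l \<le> ?m")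
    case True
    then show ?thesis using inside by (simp add: min_absorb2)
  next
    case False
    then have "0 < \<delta>"
      using pi_less_a_switch_zero[OF assms(1,3)] assms(2-4) by (cases "\<delta> = 0") auto
    have left: "strict_antimono_on {?m..pi - l} (osc_uJ \<alpha> l \<delta>)"
    proof (rule monotone_on_transform)
      show "strict_antimono_on {?m..pi - l} (osc_left \<alpha> l \<delta>)"
        using osc_left_strict_antimono[OF assms(1) \<open>0 < \<delta>\<close> assms(3)]
        by (rule monotone_on_subset) (use assms in auto)
      show "osc_uJ \<alpha> l \<delta> a = osc_left \<alpha> l \<delta> a" if "a \<in> {?m..pi - l}" for a
        using that assms \<open>0 < \<delta>\<close> a0 by (intro osc_uJ_left) auto
    qed
    from inside False have "strict_antimono_on {?a0..?m} (osc_uJ \<alpha> l \<delta>)"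
      by (simp add: min_absorb1)
    from strict_antimono_on_atLeastAtMost_join[OF this left] show ?thesis .
  qed
qed

lemma alpha_g_less_iff:
  assumes "0 < l" "l < pi" "0 \<le> \<delta>" "0 < \<alpha>"
  shows "alpha_g l \<delta> < \<alpha> \<longleftrightarrow> 0 < quad_g l \<delta> \<alpha>"
proof -
  define p where "p = pi\<^sup>2 * \<delta> + 2 * pi * l - l\<^sup>2"
  define q where "q = (2 * (pi * \<delta> + l) * (pi - l) - pi * l * (1 + \<delta>)) / (pi - l)"
  define s where "s = \<delta> - (1 + \<delta>) * l / (pi - l)"
  have quad_g: "quad_g l \<delta> x = p * x\<^sup>2 + q * x + s" for x
    by (simp add: quad_g_def p_def q_def s_def)
  have "p = pi\<^sup>2 * \<delta> + l * (2 * pi - l)"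
    by (simp add: p_def power2_eq_square algebra_simps)
  moreover have "0 < l * (2 * pi - l)" "0 \<le> pi\<^sup>2 * \<delta>"
    using assms by simp_all
  ultimately have "0 < p"
    by linarith
  show ?thesis
  proof (cases "(1 + \<delta>) * l > \<delta> * (pi - l)")
    case True
    then have "s < 0"
      using assms by (simp add: s_def pos_less_divide_eq)
    then obtain r where r: "0 < r" "\<And>x. 0 < x \<Longrightarrow> sgn (quad_g l \<delta> x) = sgn (x - r)"
      using quadratic_positive_root[OF \<open>0 < p\<close>] unfolding quad_g by blast
    have "alpha_g l \<delta> = (THE x. 0 < x \<and> quad_g l \<delta> x = 0)"
      using True by (simp add: alpha_g_def)
    also have "\<dots> = r"
    proof (rule the_equality)
      show "0 < r \<and> quad_g l \<delta> r = 0"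
        using r(1) r(2)[OF r(1)] by (simp add: sgn_0_0)
      show "x = r" if "0 < x \<and> quad_g l \<delta> x = 0" for x
      proof -
        have "sgn (x - r) = 0"
          using that r(2)[of x] by simp
        then show ?thesis
          by (simp add: sgn_0_0)
      qed
    qed
    finally show ?thesis
      using r(2)[OF assms(4)] by (metis sgn_1_pos diff_gt_0_iff_gt)
  next
    case False
    then have "0 \<le> s"
      using assms by (simp add: s_def pos_divide_le_eq)
    have "pi * ((1 + \<delta>) * l) \<le> pi * (\<delta> * (pi - l))"
      using False by (intro mult_left_mono) auto
    moreover have "0 < pi * ((1 + \<delta>) * l)" "0 < 2 * l * (pi - l)"
      using assms by simp_all
    moreover have "2 * (pi * \<delta> + l) * (pi - l) - pi * l * (1 + \<delta>) =
        2 * (pi * (\<delta> * (pi - l))) + 2 * l * (pi - l) - pi * ((1 + \<delta>) * l)"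
      by (simp add: algebra_simps)
    ultimately have "0 < 2 * (pi * \<delta> + l) * (pi - l) - pi * l * (1 + \<delta>)"
      by linarith
    then have "0 < q"
      using assms by (simp add: q_def)
    then have "0 < quad_g l \<delta> \<alpha>"
      using \<open>0 < p\<close> \<open>0 \<le> s\<close> assms(4) unfolding quad_g
      by (simp add: add_pos_nonneg)
    with False assms(4) show ?thesis
      by (simp add: alpha_g_def)
  qed
qed

lemma Theta_denominator_eq:
  assumes "0 < \<alpha>"
  shows "(pi\<^sup>2 * \<delta> + 2 * pi * l - l\<^sup>2) * \<alpha>\<^sup>2 + 2 * (pi * \<delta> + l) * \<alpha> + \<delta>
           = (1 + \<alpha> * pi)\<^sup>2 * osc_inside_curv \<alpha> l \<delta>"
proof -
  define A where "A = 1 + \<alpha> * pi"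
  have "0 < A"
    using assms by (simp add: A_def add_pos_pos)
  then have cA: "c_alpha \<alpha> * A = \<alpha>"
    by (simp add: c_alpha_def A_def)
  have "A\<^sup>2 * osc_inside_curv \<alpha> l \<delta> = A\<^sup>2 * \<delta> + 2 * l * (c_alpha \<alpha> * A) * A - l\<^sup>2 * (c_alpha \<alpha> * A)\<^sup>2"
    by (simp add: osc_inside_curv_def power2_eq_square algebra_simps)
  also have "\<dots> = A\<^sup>2 * \<delta> + 2 * l * \<alpha> * A - l\<^sup>2 * \<alpha>\<^sup>2"
    unfolding cA ..
  also have "\<dots> = (pi\<^sup>2 * \<delta> + 2 * pi * l - l\<^sup>2) * \<alpha>\<^sup>2 + 2 * (pi * \<delta> + l) * \<alpha> + \<delta>"
    by (simp add: A_def power2_eq_square algebra_simps)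
  finally show ?thesis
    by (simp add: A_def)
qed

lemma quad_g_mult_eq:
  assumes "l < pi" "0 < \<alpha>"
  shows "quad_g l \<delta> \<alpha> * (pi - l) =
           (1 + \<alpha> * pi) * ((pi - l) * (1 + \<alpha> * pi) * osc_inside_curv \<alpha> l \<delta> - (1 + \<delta>) * l)"
proof -
  define P where "P = pi\<^sup>2 * \<delta> + 2 * pi * l - l\<^sup>2"
  define N where "N = 2 * (pi * \<delta> + l) * (pi - l) - pi * l * (1 + \<delta>)"
  have "quad_g l \<delta> \<alpha> * (pi - l) = P * \<alpha>\<^sup>2 * (pi - l)
      + N / (pi - l) * \<alpha> * (pi - l) + \<delta> * (pi - l) - (1 + \<delta>) * l / (pi - l) * (pi - l)"
    unfolding quad_g_def P_def[symmetric] N_def[symmetric]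
    by (simp only: distrib_right left_diff_distrib)
  also have "\<dots> = P * \<alpha>\<^sup>2 * (pi - l) + N * \<alpha> + \<delta> * (pi - l) - (1 + \<delta>) * l"
    using assms(1) by simp
  also have "\<dots> = (pi - l) * ((pi\<^sup>2 * \<delta> + 2 * pi * l - l\<^sup>2) * \<alpha>\<^sup>2 + 2 * (pi * \<delta> + l) * \<alpha> + \<delta>)
      - (1 + \<delta>) * l * (1 + \<alpha> * pi)"
    by (simp add: P_def N_def algebra_simps)
  also have "\<dots> = (1 + \<alpha> * pi) * ((pi - l) * (1 + \<alpha> * pi) * osc_inside_curv \<alpha> l \<delta> - (1 + \<delta>) * l)"
    unfolding Theta_denominator_eq[OF assms(2)] by (simp add: power2_eq_square algebra_simps)
  finally show ?thesis .
qed

lemma quad_g_pos_iff: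
  assumes "0 < l" "l < pi" "0 \<le> \<delta>" "0 < \<alpha>"
  shows "0 < quad_g l \<delta> \<alpha> \<longleftrightarrow> a_zero \<alpha> l \<delta> < pi - l"
proof -
  define A where "A = 1 + \<alpha> * pi"
  define E where "E = osc_inside_curv \<alpha> l \<delta>"
  have "0 < A" "0 < E"
    using assms osc_inside_curv_pos[of \<alpha> l \<delta>] by (simp_all add: A_def E_def add_pos_pos)
  have "0 < quad_g l \<delta> \<alpha> \<longleftrightarrow> 0 < quad_g l \<delta> \<alpha> * (pi - l)"
    using assms(2) by (simp add: zero_less_mult_iff)
  also have "\<dots> \<longleftrightarrow> (1 + \<delta>) * l < (pi - l) * (A * E)"
    using \<open>0 < A\<close> unfolding quad_g_mult_eq[OF assms(2,4)] A_def[symmetric] E_def[symmetric]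
    by (simp add: zero_less_mult_iff mult.assoc)
  also have "\<dots> \<longleftrightarrow> a_zero \<alpha> l \<delta> < pi - l"
    using \<open>0 < A\<close> \<open>0 < E\<close> unfolding a_zero_def A_def[symmetric] osc_inside_curv_def[symmetric] E_def[symmetric]
    by (simp add: pos_divide_less_eq mult.commute)
  finally show ?thesis .
qed

lemma alpha_g_less_iff_a_zero_less:
  assumes "0 < l" "l < pi" "0 \<le> \<delta>" "0 < \<alpha>"
  shows "alpha_g l \<delta> < \<alpha> \<longleftrightarrow> a_zero \<alpha> l \<delta> < pi - l"
  using alpha_g_less_iff[OF assms] quad_g_pos_iff[OF assms] by simp

lemma osc_inside_a_zero:
  assumes "0 < \<alpha>" "0 < l" "l \<le> pi" "0 \<le> \<delta>"
  shows "osc_inside \<alpha> l \<delta> (a_zero \<alpha> l \<delta>) =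
           \<delta> * pi\<^sup>2 / 2 + pi * l - l\<^sup>2 / 2 + l * (1 - c_alpha \<alpha> * pi) * a_zero \<alpha> l \<delta> / 2"
proof -
  define g where "g = osc_inside_curv \<alpha> l \<delta> / (1 + \<delta>)"
  have "g * (a_zero \<alpha> l \<delta>)\<^sup>2 = (g * a_zero \<alpha> l \<delta>) * a_zero \<alpha> l \<delta>"
    by (simp add: power2_eq_square)
  also have "\<dots> = l * (1 - c_alpha \<alpha> * pi) * a_zero \<alpha> l \<delta>"
    unfolding g_def osc_inside_curv_mult_a_zero[OF assms] ..
  finally show ?thesis
    unfolding osc_inside_def g_def[symmetric] by linarith
qed

lemma Theta_eq_osc_inside_a_zero:
  assumes "0 < l" "l < pi" "0 \<le> \<delta>" "0 < \<alpha>" "alpha_g l \<delta> < \<alpha>"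
  shows "Theta \<alpha> l \<delta> = osc_inside \<alpha> l \<delta> (a_zero \<alpha> l \<delta>)"
proof -
  have "0 < 1 + \<alpha> * pi" "osc_inside_curv \<alpha> l \<delta> \<noteq> 0"
    using assms osc_inside_curv_pos[of \<alpha> l \<delta>] by (simp_all add: add_pos_pos)
  then have "l * (1 - c_alpha \<alpha> * pi) * a_zero \<alpha> l \<delta> / 2 =
      (1/2) * ((1 + \<delta>) * l\<^sup>2 /
        ((pi\<^sup>2 * \<delta> + 2 * pi * l - l\<^sup>2) * \<alpha>\<^sup>2 + 2 * (pi * \<delta> + l) * \<alpha> + \<delta>))"
    unfolding Theta_denominator_eq[OF assms(4)] a_zero_def one_minus_c_alpha_pi[OF assms(4)]
      osc_inside_curv_def
    by (simp add: field_simps power2_eq_square)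
  moreover have "Theta \<alpha> l \<delta> = (1/2) * ((1 + \<delta>) * l\<^sup>2 /
        ((pi\<^sup>2 * \<delta> + 2 * pi * l - l\<^sup>2) * \<alpha>\<^sup>2 + 2 * (pi * \<delta> + l) * \<alpha> + \<delta>))
      + pi * l + \<delta> * pi\<^sup>2 / 2 - l\<^sup>2 / 2"
    unfolding Theta_def using assms(5) by simp
  ultimately show ?thesis
    using osc_inside_a_zero[OF assms(4,1) less_imp_le[OF assms(2)] assms(3)] by linarith
qed

lemma Theta_eq_osc_inside_end:
  assumes "0 \<le> \<delta>" "0 < \<alpha>" "\<not> alpha_g l \<delta> < \<alpha>"
  shows "Theta \<alpha> l \<delta> = osc_inside \<alpha> l \<delta> (pi - l)"
proof -
  have "1 + \<delta> \<noteq> 0"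
    using assms by simp
  with assms(3) show ?thesis
    unfolding Theta_def osc_inside_def osc_inside_curv_def one_minus_c_alpha_pi[OF assms(2)]
    by (simp add: field_simps power2_eq_square)
qed

lemma osc_uJ_peak_at_a_zero:
  assumes "0 < l" "l < pi" "0 < \<alpha>" "0 \<le> \<delta>" "alpha_g l \<delta> < \<alpha>"
  shows "a_zero \<alpha> l \<delta> \<in> {0..pi - l}" "osc_uJ \<alpha> l \<delta> (a_zero \<alpha> l \<delta>) = Theta \<alpha> l \<delta>"
    "\<And>a. a \<in> {0..pi - l} \<Longrightarrow> osc_uJ \<alpha> l \<delta> a \<le> Theta \<alpha> l \<delta>"
proof -
  let ?a0 = "a_zero \<alpha> l \<delta>"
  have "0 < ?a0" "?a0 \<le> a_switch \<alpha> l \<delta>"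
    using a_zero_pos a_zero_le_a_switch assms less_imp_le by blast+
  moreover have "?a0 < pi - l"
    using alpha_g_less_iff_a_zero_less[OF assms(1,2,4,3)] assms(5) by simp
  ultimately show a0: "?a0 \<in> {0..pi - l}"
    by simp
  show peak: "osc_uJ \<alpha> l \<delta> ?a0 = Theta \<alpha> l \<delta>"
    using Theta_eq_osc_inside_a_zero[OF assms(1,2,4,3,5)] osc_uJ_inside[of \<alpha> \<delta> l ?a0] a0 assms
      \<open>?a0 \<le> a_switch \<alpha> l \<delta>\<close> by simp
  fix a assume a: "a \<in> {0..pi - l}"
  show "osc_uJ \<alpha> l \<delta> a \<le> Theta \<alpha> l \<delta>"
  proof (cases "a \<le> ?a0")
    case True
    have "mono_on ({0..?a0} \<inter> {0..pi - l}) (osc_uJ \<alpha> l \<delta>)"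
      using strict_mono_on_imp_mono_on[OF osc_uJ_strict_mono_on[OF assms(3,4,1,2)]] .
    then show ?thesis
      using mono_onD[of _ "osc_uJ \<alpha> l \<delta>" a ?a0] True a a0 peak by auto
  next
    case False
    then show ?thesis
      using monotone_onD[OF osc_uJ_strict_antimono_on[OF assms(3,4,1,2)], of ?a0 a] a a0 peak by auto
  qed
qed

lemma osc_uJ_peak_at_end:
  assumes "0 < l" "l < pi" "0 < \<alpha>" "0 \<le> \<delta>" "\<not> alpha_g l \<delta> < \<alpha>"
  shows "strict_mono_on {0..pi - l} (osc_uJ \<alpha> l \<delta>)" "osc_uJ \<alpha> l \<delta> (pi - l) = Theta \<alpha> l \<delta>"
    "\<And>a. a \<in> {0..pi - l} \<Longrightarrow> osc_uJ \<alpha> l \<delta> a \<le> Theta \<alpha> l \<delta>"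
proof -
  have "pi - l \<le> a_zero \<alpha> l \<delta>"
    using alpha_g_less_iff_a_zero_less[OF assms(1,2,4,3)] assms(5) by simp
  then have "{0..a_zero \<alpha> l \<delta>} \<inter> {0..pi - l} = {0..pi - l}"
    by auto
  then show mono: "strict_mono_on {0..pi - l} (osc_uJ \<alpha> l \<delta>)"
    using osc_uJ_strict_mono_on[OF assms(3,4,1,2)] by (simp only:)
  have "pi - l \<le> a_switch \<alpha> l \<delta>"
    using \<open>pi - l \<le> a_zero \<alpha> l \<delta>\<close> a_zero_le_a_switch assms by fastforce
  then show peak: "osc_uJ \<alpha> l \<delta> (pi - l) = Theta \<alpha> l \<delta>"
    using Theta_eq_osc_inside_end[OF assms(4,3,5)] osc_uJ_inside[of \<alpha> \<delta> l "pi - l"] assms by simp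
  fix a assume "a \<in> {0..pi - l}"
  then show "osc_uJ \<alpha> l \<delta> a \<le> Theta \<alpha> l \<delta>"
    using mono_onD[OF strict_mono_on_imp_mono_on[OF mono], of a "pi - l"] peak by auto
qed

theorem lemma3:
  fixes l \<alpha> \<delta> :: real
  assumes "0 < l" "l < pi" "0 < \<alpha>" "0 \<le> \<delta>"
  defines "oscJ \<equiv> (\<lambda>a. osc (robin_sol \<alpha> (\<lambda>y. \<delta> + indicator (I_int a l) y)))"
  shows "((\<exists>a\<in>{0..pi - l}. oscJ a = Theta \<alpha> l \<delta>) \<and> (\<forall>a\<in>{0..pi - l}. oscJ a \<le> Theta \<alpha> l \<delta>))
       \<and> (\<alpha> > alpha_g l \<delta> \<longrightarrow>
           strict_mono_on ({0..a_zero \<alpha> l \<delta>} \<inter> {0..pi - l}) oscJ \<and>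
           strict_antimono_on ({a_zero \<alpha> l \<delta>..pi - l} \<inter> {0..pi - l}) oscJ)
       \<and> (\<alpha> \<le> alpha_g l \<delta> \<longrightarrow> strict_mono_on {0..pi - l} oscJ)"
proof -
  have oscJ: "oscJ = osc_uJ \<alpha> l \<delta>"
    unfolding oscJ_def osc_uJ_def ..
  show ?thesis
  proof (cases "alpha_g l \<delta> < \<alpha>")
    case True
    have "strict_antimono_on ({a_zero \<alpha> l \<delta>..pi - l} \<inter> {0..pi - l}) (osc_uJ \<alpha> l \<delta>)"
      using osc_uJ_strict_antimono_on[OF assms(3,4,1,2)] by (rule monotone_on_subset) auto
    with osc_uJ_peak_at_a_zero[OF assms(1-4) True] osc_uJ_strict_mono_on[OF assms(3,4,1,2)] True
    show ?thesis
      unfolding oscJ by auto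
  next
    case False
    with osc_uJ_peak_at_end[OF assms(1-4) False] assms(1,2) show ?thesis
      unfolding oscJ by auto
  qed
qed

end
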